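(* Let $(\Omega,\Sigma,\mu)$ be a finite measure space and let $X(\mu)\subseteq L^0(\mu)$ be a Riesz space (i.e. a vector subspace with $\max\{f,g\}\in X(\mu)$ for all $f,g\in X(\mu)$) equipped with a norm. Let $V:X(\mu)\to X(\mu)$, $V(f)=|f|$. (i) If $V$ is continuous, then the positive cone $X(\mu)^+=\{f\in X(\mu): f\ge 0\ \mu\text{-a.e.}\}$ is closed in $X(\mu)$. (ii) If $X(\mu)$ has the subsequence property, then $X(\mu)^+$ is closed in $X(\mu)$.
   Context: $L^0(\mu)$ is the space of equivalence classes (modulo $\mu$-a.e. equality) of real $\Sigma$-measurable functions on $\Omega$, with the order $f\le g$ iff $f\le g$ $\mu$-a.e. A normed space $X(\mu)\subseteq L^0(\mu)$ has the subsequence property if whenever $f_n,f\in X(\mu)$ and $f_n\to f$ in norm, some subsequence $f_{n(k)}$ converges to $f$ pointwise $\mu$-a.e. *)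

theory Defs
  imports "HOL-Analysis.Analysis"
begin

text \<open>Elements of L^0(mu) are represented by real-valued measurable functions;
  a subspace X(mu) of L^0(mu) is represented by the set of ALL representatives of its
  classes (so it is saturated under a.e. equality). A norm on X(mu) is a function N on
  representatives that is a norm modulo a.e. equality.\<close>

definition normed_riesz_L0 ::
  "'a measure \<Rightarrow> ('a \<Rightarrow> real) set \<Rightarrow> (('a \<Rightarrow> real) \<Rightarrow> real) \<Rightarrow> bool" where
  "normed_riesz_L0 M X N \<longleftrightarrow>
     X \<subseteq> borel_measurable M \<and>
     (\<forall>f\<in>X. \<forall>g\<in>borel_measurable M. (AE x in M. f x = g x) \<longrightarrow> g \<in> X) \<and>
     (\<lambda>x. 0) \<in> X \<and>
     (\<forall>f\<in>X. \<forall>g\<in>X. (\<lambda>x. f x + g x) \<in> X) \<and>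
     (\<forall>f\<in>X. \<forall>c::real. (\<lambda>x. c * f x) \<in> X) \<and>
     (\<forall>f\<in>X. \<forall>g\<in>X. (\<lambda>x. max (f x) (g x)) \<in> X) \<and>
     (\<forall>f\<in>X. 0 \<le> N f) \<and>
     (\<forall>f\<in>X. N f = 0 \<longleftrightarrow> (AE x in M. f x = 0)) \<and>
     (\<forall>f\<in>X. \<forall>c::real. N (\<lambda>x. c * f x) = \<bar>c\<bar> * N f) \<and>
     (\<forall>f\<in>X. \<forall>g\<in>X. N (\<lambda>x. f x + g x) \<le> N f + N g)"

definition positive_cone ::
  "'a measure \<Rightarrow> ('a \<Rightarrow> real) set \<Rightarrow> ('a \<Rightarrow> real) set" where
  "positive_cone M X = {f \<in> X. AE x in M. 0 \<le> f x}"

definition norm_closed_in ::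
  "('a \<Rightarrow> real) set \<Rightarrow> (('a \<Rightarrow> real) \<Rightarrow> real) \<Rightarrow> ('a \<Rightarrow> real) set \<Rightarrow> bool" where
  "norm_closed_in X N C \<longleftrightarrow>
     (\<forall>f\<in>X. f \<notin> C \<longrightarrow> (\<exists>r>0. \<forall>g\<in>X. N (\<lambda>x. g x - f x) < r \<longrightarrow> g \<notin> C))"

definition abs_continuous ::
  "('a \<Rightarrow> real) set \<Rightarrow> (('a \<Rightarrow> real) \<Rightarrow> real) \<Rightarrow> bool" where
  "abs_continuous X N \<longleftrightarrow>
     (\<forall>f\<in>X. \<forall>e>0. \<exists>d>0. \<forall>g\<in>X.
        N (\<lambda>x. g x - f x) < d \<longrightarrow> N (\<lambda>x. \<bar>g x\<bar> - \<bar>f x\<bar>) < e)"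

definition subsequence_property ::
  "'a measure \<Rightarrow> ('a \<Rightarrow> real) set \<Rightarrow> (('a \<Rightarrow> real) \<Rightarrow> real) \<Rightarrow> bool" where
  "subsequence_property M X N \<longleftrightarrow>
     (\<forall>fs f. (\<forall>n. fs n \<in> X) \<and> f \<in> X \<and> (\<lambda>n. N (\<lambda>x. fs n x - f x)) \<longlonglongrightarrow> 0 \<longrightarrow>
        (\<exists>r. strict_mono r \<and> (AE x in M. (\<lambda>k. fs (r k) x) \<longlonglongrightarrow> f x)))"

end

theory Submission
  imports Defs
begin

text \<open>Both parts follow from the sequential characterisation of norm-closed sets: let
  \<open>g\<^sub>n \<ge> 0\<close> converge in norm to \<open>f\<close>. If \<open>V\<close> is continuous, then \<open>g\<^sub>n = |g\<^sub>n|\<close> also converges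
  to \<open>|f|\<close>, so by uniqueness of norm limits \<open>f = |f| \<ge> 0\<close>. Under the subsequence property,
  some subsequence of \<open>g\<^sub>n\<close> converges to \<open>f\<close> almost everywhere, and pointwise limits of
  nonnegative functions are nonnegative.\<close>

locale normed_riesz_L0_space =
  fixes M :: "'a measure" and X :: "('a \<Rightarrow> real) set" and N :: "('a \<Rightarrow> real) \<Rightarrow> real"
  assumes normed_riesz: "normed_riesz_L0 M X N"
begin

lemma add_mem: "f \<in> X \<Longrightarrow> g \<in> X \<Longrightarrow> (\<lambda>x. f x + g x) \<in> X"
  using normed_riesz unfolding normed_riesz_L0_def by blast

lemma mult_mem: "f \<in> X \<Longrightarrow> (\<lambda>x. c * f x) \<in> X"
  using normed_riesz unfolding normed_riesz_L0_def by blast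

lemma max_mem: "f \<in> X \<Longrightarrow> g \<in> X \<Longrightarrow> (\<lambda>x. max (f x) (g x)) \<in> X"
  using normed_riesz unfolding normed_riesz_L0_def by blast

lemma norm_nonneg: "f \<in> X \<Longrightarrow> 0 \<le> N f"
  using normed_riesz unfolding normed_riesz_L0_def by blast

lemma norm_eq_zero_iff_AE: "f \<in> X \<Longrightarrow> N f = 0 \<longleftrightarrow> (AE x in M. f x = 0)"
  using normed_riesz unfolding normed_riesz_L0_def by blast

lemma norm_mult: "f \<in> X \<Longrightarrow> N (\<lambda>x. c * f x) = \<bar>c\<bar> * N f"
  using normed_riesz unfolding normed_riesz_L0_def by blast

lemma norm_add_le: "f \<in> X \<Longrightarrow> g \<in> X \<Longrightarrow> N (\<lambda>x. f x + g x) \<le> N f + N g"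
  using normed_riesz unfolding normed_riesz_L0_def by blast

lemma diff_mem:
  assumes "f \<in> X" "g \<in> X"
  shows "(\<lambda>x. f x - g x) \<in> X"
  using add_mem[OF assms(1) mult_mem[OF assms(2), of "-1"]] by simp

lemma abs_mem:
  assumes "f \<in> X"
  shows "(\<lambda>x. \<bar>f x\<bar>) \<in> X"
proof -
  have "(\<lambda>x. max (f x) (-1 * f x)) \<in> X"
    using max_mem[OF assms mult_mem[OF assms]] .
  moreover have "(\<lambda>x. max (f x) (-1 * f x)) = (\<lambda>x. \<bar>f x\<bar>)"
    by (auto simp: fun_eq_iff)
  ultimately show ?thesis by simp
qed

lemma norm_diff_commute:
  assumes "f \<in> X" "g \<in> X"
  shows "N (\<lambda>x. f x - g x) = N (\<lambda>x. g x - f x)"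
  using norm_mult[OF diff_mem[OF assms], of "-1"] by simp

lemma norm_diff_triangle:
  assumes "f \<in> X" "g \<in> X" "h \<in> X"
  shows "N (\<lambda>x. f x - h x) \<le> N (\<lambda>x. f x - g x) + N (\<lambda>x. g x - h x)"
  using norm_add_le[OF diff_mem[OF assms(1,2)] diff_mem[OF assms(2,3)]] by simp

lemma norm_cong_AE:
  assumes "f \<in> X" "g \<in> X" "AE x in M. f x = g x"
  shows "N f = N g"
proof -
  have "N (\<lambda>x. f x - g x) = 0" "N (\<lambda>x. g x - f x) = 0"
    using assms(3) norm_eq_zero_iff_AE[OF diff_mem[OF assms(1,2)]]
      norm_eq_zero_iff_AE[OF diff_mem[OF assms(2,1)]] by (auto elim: AE_mp)
  moreover have "N (\<lambda>x. (f x - g x) + g x) \<le> N (\<lambda>x. f x - g x) + N g"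
    by (rule norm_add_le[OF diff_mem[OF assms(1,2)] assms(2)])
  moreover have "N (\<lambda>x. (g x - f x) + f x) \<le> N (\<lambda>x. g x - f x) + N f"
    by (rule norm_add_le[OF diff_mem[OF assms(2,1)] assms(1)])
  ultimately show ?thesis by simp
qed

lemma norm_closed_inI_sequentially:
  assumes "C \<subseteq> X"
    and seq_closed: "\<And>gs f. (\<And>n. gs n \<in> C) \<Longrightarrow> f \<in> X \<Longrightarrow>
           (\<lambda>n. N (\<lambda>x. gs n x - f x)) \<longlonglongrightarrow> 0 \<Longrightarrow> f \<in> C"
  shows "norm_closed_in X N C"
  unfolding norm_closed_in_def
proof (intro ballI impI)
  fix f assume f: "f \<in> X" "f \<notin> C"
  show "\<exists>r>0. \<forall>g\<in>X. N (\<lambda>x. g x - f x) < r \<longrightarrow> g \<notin> C"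
  proof (rule ccontr)
    assume "\<not> ?thesis"
    then have "\<forall>n. \<exists>g\<in>C. N (\<lambda>x. g x - f x) < 1 / Suc n"
      using assms(1) by (metis of_nat_0_less_iff zero_less_Suc zero_less_divide_1_iff subsetD)
    then obtain gs where gs: "\<And>n. gs n \<in> C" "\<And>n. N (\<lambda>x. gs n x - f x) < 1 / Suc n"
      by metis
    have "(\<lambda>n. N (\<lambda>x. gs n x - f x)) \<longlonglongrightarrow> 0"
    proof (rule real_tendsto_sandwich[where f="\<lambda>n. 0" and h="\<lambda>n. 1 / Suc n"])
      show "\<forall>\<^sub>F n in sequentially. 0 \<le> N (\<lambda>x. gs n x - f x)"
        using gs(1) assms(1) f(1) by (auto intro!: always_eventually norm_nonneg diff_mem)
      show "\<forall>\<^sub>F n in sequentially. N (\<lambda>x. gs n x - f x) \<le> 1 / Suc n"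
        using gs(2) by (simp add: less_imp_le)
      show "(\<lambda>n. 1 / real (Suc n)) \<longlonglongrightarrow> 0"
        using LIMSEQ_inverse_real_of_nat by (simp add: inverse_eq_divide)
    qed simp
    then show False
      using seq_closed[of gs, OF gs(1) f(1)] f(2) by blast
  qed
qed

lemma norm_limit_unique_AE:
  assumes fs: "\<And>n. fs n \<in> X" and "f \<in> X" "g \<in> X"
    and lim_f: "(\<lambda>n. N (\<lambda>x. fs n x - f x)) \<longlonglongrightarrow> 0"
    and lim_g: "(\<lambda>n. N (\<lambda>x. fs n x - g x)) \<longlonglongrightarrow> 0"
  shows "AE x in M. f x = g x"
proof -
  have "N (\<lambda>x. f x - g x) \<le> N (\<lambda>x. fs n x - f x) + N (\<lambda>x. fs n x - g x)" for n
    using norm_diff_triangle[OF \<open>f \<in> X\<close> fs \<open>g \<in> X\<close>] norm_diff_commute[OF \<open>f \<in> X\<close> fs]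
    by simp
  then have "N (\<lambda>x. f x - g x) \<le> 0"
    using LIMSEQ_le_const[OF tendsto_add_zero[OF lim_f lim_g]] by blast
  then have "N (\<lambda>x. f x - g x) = 0"
    using norm_nonneg[OF diff_mem[OF assms(2,3)]] by simp
  then show ?thesis
    using norm_eq_zero_iff_AE[OF diff_mem[OF assms(2,3)]] by (auto elim: AE_mp)
qed

lemma abs_continuous_tendsto:
  assumes "abs_continuous X N" and fs: "\<And>n. fs n \<in> X" and "f \<in> X"
    and lim: "(\<lambda>n. N (\<lambda>x. fs n x - f x)) \<longlonglongrightarrow> 0"
  shows "(\<lambda>n. N (\<lambda>x. \<bar>fs n x\<bar> - \<bar>f x\<bar>)) \<longlonglongrightarrow> 0"
  unfolding LIMSEQ_iff
proof (intro allI impI)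
  fix e :: real assume "e > 0"
  then obtain d where "d > 0"
    and d: "\<And>g. g \<in> X \<Longrightarrow> N (\<lambda>x. g x - f x) < d \<Longrightarrow> N (\<lambda>x. \<bar>g x\<bar> - \<bar>f x\<bar>) < e"
    using assms(1) \<open>f \<in> X\<close> unfolding abs_continuous_def by blast
  obtain n\<^sub>0 where "\<forall>n\<ge>n\<^sub>0. norm (N (\<lambda>x. fs n x - f x) - 0) < d"
    using lim \<open>d > 0\<close> unfolding LIMSEQ_iff by blast
  then have "N (\<lambda>x. \<bar>fs n x\<bar> - \<bar>f x\<bar>) < e" if "n \<ge> n\<^sub>0" for n
    using d[OF fs] that by fastforce
  moreover have "0 \<le> N (\<lambda>x. \<bar>fs n x\<bar> - \<bar>f x\<bar>)" for n
    using fs \<open>f \<in> X\<close> by (intro norm_nonneg diff_mem abs_mem)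
  ultimately show "\<exists>n\<^sub>0. \<forall>n\<ge>n\<^sub>0. norm (N (\<lambda>x. \<bar>fs n x\<bar> - \<bar>f x\<bar>) - 0) < e"
    by auto
qed

lemma positive_cone_subset: "positive_cone M X \<subseteq> X"
  unfolding positive_cone_def by blast

lemma positive_cone_closed_if_abs_continuous:
  assumes "abs_continuous X N"
  shows "norm_closed_in X N (positive_cone M X)"
proof (rule norm_closed_inI_sequentially[OF positive_cone_subset])
  fix gs f assume gs: "\<And>n. gs n \<in> positive_cone M X" and "f \<in> X"
    and lim: "(\<lambda>n. N (\<lambda>x. gs n x - f x)) \<longlonglongrightarrow> 0"
  have gsX: "gs n \<in> X" and gs_nonneg: "AE x in M. 0 \<le> gs n x" for n
    using gs unfolding positive_cone_def by auto
  have "N (\<lambda>x. \<bar>gs n x\<bar> - \<bar>f x\<bar>) = N (\<lambda>x. gs n x - \<bar>f x\<bar>)" for n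
    using gs_nonneg[of n] gsX[of n] \<open>f \<in> X\<close>
    by (intro norm_cong_AE diff_mem abs_mem) (auto elim: AE_mp)
  then have "(\<lambda>n. N (\<lambda>x. gs n x - \<bar>f x\<bar>)) \<longlonglongrightarrow> 0"
    using abs_continuous_tendsto[OF assms gsX \<open>f \<in> X\<close> lim] by simp
  then have "AE x in M. f x = \<bar>f x\<bar>"
    using norm_limit_unique_AE[OF gsX \<open>f \<in> X\<close> abs_mem[OF \<open>f \<in> X\<close>] lim] by blast
  then show "f \<in> positive_cone M X"
    using \<open>f \<in> X\<close> unfolding positive_cone_def by (auto elim: AE_mp)
qed

lemma positive_cone_closed_if_subsequence_property:
  assumes "subsequence_property M X N"
  shows "norm_closed_in X N (positive_cone M X)"
proof (rule norm_closed_inI_sequentially[OF positive_cone_subset])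
  fix gs f assume gs: "\<And>n. gs n \<in> positive_cone M X" and "f \<in> X"
    and "(\<lambda>n. N (\<lambda>x. gs n x - f x)) \<longlonglongrightarrow> 0"
  then obtain r where "AE x in M. (\<lambda>k. gs (r k) x) \<longlonglongrightarrow> f x"
    using assms positive_cone_subset unfolding subsequence_property_def by blast
  moreover have "AE x in M. \<forall>n. 0 \<le> gs n x"
    using gs unfolding positive_cone_def AE_all_countable by blast
  ultimately have "AE x in M. 0 \<le> f x"
    by eventually_elim (auto intro: LIMSEQ_le_const)
  then show "f \<in> positive_cone M X"
    using \<open>f \<in> X\<close> unfolding positive_cone_def by blast
qed

end

theorem lemma2p2:
  fixes M :: "'a measure" and X :: "('a \<Rightarrow> real) set" and N :: "('a \<Rightarrow> real) \<Rightarrow> real"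
  assumes "finite_measure M"
    and "normed_riesz_L0 M X N"
  shows "(abs_continuous X N \<longrightarrow> norm_closed_in X N (positive_cone M X))
       \<and> (subsequence_property M X N \<longrightarrow> norm_closed_in X N (positive_cone M X))"
proof -
  interpret normed_riesz_L0_space M X N
    by unfold_locales (rule assms(2))
  show ?thesis
    using positive_cone_closed_if_abs_continuous positive_cone_closed_if_subsequence_property
    by blast
qed

end
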